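(* Suppose $R$ is not a local multiplicative hyperring. Then a hyperideal $I$ of $R$ is 1-absorbing primary if and only if $I$ is a primary hyperideal of $R$.
   Context: Throughout, $R$ is a commutative multiplicative hyperring ($(R,+)$ abelian group, $\circ$ a commutative associative hyperoperation into nonempty subsets, $a\circ(b+c)\subseteq a\circ b+a\circ c$, $a\circ(-b)=(-a)\circ b=-(a\circ b)$; $A\circ B=\bigcup a\circ b$), with identity $1$ ($a\in a\circ 1$); $x$ is a unit if $1\in x\circ y$ for some $y$. All hyperideals are $\mathbf{C}$-hyperideals (for any finite product $A=r_1\circ\cdots\circ r_n$, $A\cap I\neq\emptyset\Rightarrow A\subseteq I$). $\sqrt I=\{r:r^n\subseteq I\text{ for some }n\}$. Primary hyperideal: nonzero proper $Q$ with $x\circ y\subseteq Q\Rightarrow x\in Q$ or $y\in\sqrt Q$. 1-absorbing primary hyperideal: proper $I$ such that for all nonunit $x,y,z$, $x\circ y\circ z\subseteq I$ implies $x\circ y\subseteq I$ or $z\in\sqrt I$. $R$ is local if it has a unique maximal hyperideal. *)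

theory Defs
  imports Main
begin

text \<open>A commutative multiplicative hyperring: the additive group is the type 'a (an abelian
group), the hyperoperation is m :: 'a => 'a => 'a set, and e is the multiplicative identity.\<close>

definition hsetprod :: "('a \<Rightarrow> 'a \<Rightarrow> 'a set) \<Rightarrow> 'a set \<Rightarrow> 'a set \<Rightarrow> 'a set" where
  "hsetprod m A B = (\<Union>a\<in>A. \<Union>b\<in>B. m a b)"

definition mult_hyperring :: "('a::ab_group_add \<Rightarrow> 'a \<Rightarrow> 'a set) \<Rightarrow> 'a \<Rightarrow> bool" where
  "mult_hyperring m e \<longleftrightarrow>
     (\<forall>a b. m a b \<noteq> {}) \<and>
     (\<forall>a b. m a b = m b a) \<and>
     (\<forall>a b c. hsetprod m (m a b) {c} = hsetprod m {a} (m b c)) \<and>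
     (\<forall>a b c. m a (b + c) \<subseteq> {x + y | x y. x \<in> m a b \<and> y \<in> m a c}) \<and>
     (\<forall>a b. m a (- b) = uminus ` m a b \<and> m (- a) b = uminus ` m a b) \<and>
     (\<forall>a. a \<in> m a e)"

definition hunit :: "('a \<Rightarrow> 'a \<Rightarrow> 'a set) \<Rightarrow> 'a \<Rightarrow> 'a \<Rightarrow> bool" where
  "hunit m e x \<longleftrightarrow> (\<exists>y. e \<in> m x y)"

fun hprod :: "('a \<Rightarrow> 'a \<Rightarrow> 'a set) \<Rightarrow> 'a \<Rightarrow> 'a list \<Rightarrow> 'a set" where
  "hprod m e [] = {e}"
| "hprod m e [x] = {x}"
| "hprod m e (x # y # rs) = hsetprod m {x} (hprod m e (y # rs))"

definition hpow :: "('a \<Rightarrow> 'a \<Rightarrow> 'a set) \<Rightarrow> 'a \<Rightarrow> 'a \<Rightarrow> nat \<Rightarrow> 'a set" where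
  "hpow m e r n = hprod m e (replicate n r)"

definition hradical :: "('a \<Rightarrow> 'a \<Rightarrow> 'a set) \<Rightarrow> 'a \<Rightarrow> 'a set \<Rightarrow> 'a set" where
  "hradical m e I = {r. \<exists>n\<ge>1. hpow m e r n \<subseteq> I}"

text \<open>Hyperideals (all hyperideals are C-hyperideals).\<close>
definition hyperideal :: "('a::ab_group_add \<Rightarrow> 'a \<Rightarrow> 'a set) \<Rightarrow> 'a \<Rightarrow> 'a set \<Rightarrow> bool" where
  "hyperideal m e I \<longleftrightarrow>
     I \<noteq> {} \<and>
     (\<forall>a\<in>I. \<forall>b\<in>I. a - b \<in> I) \<and>
     (\<forall>r a. a \<in> I \<longrightarrow> m r a \<subseteq> I) \<and>
     (\<forall>xs. xs \<noteq> [] \<longrightarrow> hprod m e xs \<inter> I \<noteq> {} \<longrightarrow> hprod m e xs \<subseteq> I)"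

definition maximal_hyperideal :: "('a::ab_group_add \<Rightarrow> 'a \<Rightarrow> 'a set) \<Rightarrow> 'a \<Rightarrow> 'a set \<Rightarrow> bool" where
  "maximal_hyperideal m e M \<longleftrightarrow>
     hyperideal m e M \<and> M \<noteq> UNIV \<and>
     (\<forall>J. hyperideal m e J \<longrightarrow> M \<subseteq> J \<longrightarrow> J = M \<or> J = UNIV)"

definition local_hyperring :: "('a::ab_group_add \<Rightarrow> 'a \<Rightarrow> 'a set) \<Rightarrow> 'a \<Rightarrow> bool" where
  "local_hyperring m e \<longleftrightarrow> (\<exists>!M. maximal_hyperideal m e M)"

definition primary_hyperideal :: "('a::ab_group_add \<Rightarrow> 'a \<Rightarrow> 'a set) \<Rightarrow> 'a \<Rightarrow> 'a set \<Rightarrow> bool" where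
  "primary_hyperideal m e Q \<longleftrightarrow>
     hyperideal m e Q \<and> Q \<noteq> {0} \<and> Q \<noteq> UNIV \<and>
     (\<forall>x y. m x y \<subseteq> Q \<longrightarrow> x \<in> Q \<or> y \<in> hradical m e Q)"

definition one_absorbing_primary :: "('a::ab_group_add \<Rightarrow> 'a \<Rightarrow> 'a set) \<Rightarrow> 'a \<Rightarrow> 'a set \<Rightarrow> bool" where
  "one_absorbing_primary m e I \<longleftrightarrow>
     hyperideal m e I \<and> I \<noteq> UNIV \<and>
     (\<forall>x y z. \<not> hunit m e x \<longrightarrow> \<not> hunit m e y \<longrightarrow> \<not> hunit m e z \<longrightarrow>
        hsetprod m (m x y) {z} \<subseteq> I \<longrightarrow> m x y \<subseteq> I \<or> z \<in> hradical m e I)"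

end

theory Submission
  imports Defs
begin

text \<open>If \<open>I\<close> is 1-absorbing primary but \<open>x \<circ> y \<subseteq> I\<close> with \<open>x \<notin> I\<close> and \<open>y \<notin> \<surd>I\<close>, then neither
  \<open>x\<close> nor \<open>y\<close> can be a unit, and for nonunits \<open>x, y\<close> the absorption property applied to
  \<open>(r \<circ> x) \<circ> y\<close> puts every nonunit \<open>r\<close> into the colon hyperideal \<open>(I : x)\<close>, which misses \<open>1\<close>.
  A proper hyperideal containing all nonunits is the unique maximal hyperideal, so \<open>R\<close> would be
  local. The converse implication holds in every multiplicative hyperring.\<close>

lemma mult_hyperring_commute: "mult_hyperring m e \<Longrightarrow> m a b = m b a"
  unfolding mult_hyperring_def by (elim conjE) simp

lemma mult_hyperring_assoc:
  "mult_hyperring m e \<Longrightarrow> hsetprod m (m a b) {c} = hsetprod m {a} (m b c)"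
  unfolding mult_hyperring_def by (elim conjE) simp

lemma mult_hyperring_one: "mult_hyperring m e \<Longrightarrow> a \<in> m a e"
  unfolding mult_hyperring_def by (elim conjE) simp

lemma mult_hyperring_nonempty: "mult_hyperring m e \<Longrightarrow> m a b \<noteq> {}"
  unfolding mult_hyperring_def by (elim conjE) simp

lemma mult_hyperring_distrib:
  "mult_hyperring m e \<Longrightarrow> m a (b + c) \<subseteq> {x + y | x y. x \<in> m a b \<and> y \<in> m a c}"
  unfolding mult_hyperring_def by (elim conjE) simp

lemma mult_hyperring_minus: "mult_hyperring m e \<Longrightarrow> m a (- b) = uminus ` m a b"
  unfolding mult_hyperring_def by (elim conjE) simp

lemma hsetprod_singletons [simp]: "hsetprod m {a} {b} = m a b"
  unfolding hsetprod_def by simp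

lemma hsetprod_assoc:
  assumes "mult_hyperring m e"
  shows "hsetprod m (hsetprod m A B) C = hsetprod m A (hsetprod m B C)"
proof -
  have "w \<in> hsetprod m (hsetprod m A B) C \<longleftrightarrow> w \<in> hsetprod m A (hsetprod m B C)" for w
  proof -
    have "w \<in> hsetprod m (hsetprod m A B) C \<longleftrightarrow>
          (\<exists>a\<in>A. \<exists>b\<in>B. \<exists>c\<in>C. w \<in> hsetprod m (m a b) {c})"
      unfolding hsetprod_def by blast
    also have "\<dots> \<longleftrightarrow> (\<exists>a\<in>A. \<exists>b\<in>B. \<exists>c\<in>C. w \<in> hsetprod m {a} (m b c))"
      using mult_hyperring_assoc[OF assms] by simp
    also have "\<dots> \<longleftrightarrow> w \<in> hsetprod m A (hsetprod m B C)"
      unfolding hsetprod_def by blast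
    finally show ?thesis .
  qed
  then show ?thesis by blast
qed

lemma hsetprod_commute:
  assumes "mult_hyperring m e"
  shows "hsetprod m A B = hsetprod m B A"
  unfolding hsetprod_def using mult_hyperring_commute[OF assms] by blast

lemma hprod_snoc:
  assumes "mult_hyperring m e" "xs \<noteq> []"
  shows "hprod m e (xs @ [z]) = hsetprod m (hprod m e xs) {z}"
  using assms(2)
proof (induction xs rule: induct_list012)
  case (3 x y zs)
  then show ?case by (simp add: hsetprod_assoc[OF assms(1)])
qed simp_all

lemma hyperideal_nonempty: "hyperideal m e I \<Longrightarrow> I \<noteq> {}"
  unfolding hyperideal_def by (elim conjE) simp

lemma hyperideal_diff_closed: "hyperideal m e I \<Longrightarrow> a \<in> I \<Longrightarrow> b \<in> I \<Longrightarrow> a - b \<in> I"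
  unfolding hyperideal_def by (elim conjE) simp

lemma hyperideal_hprod_closed:
  "hyperideal m e I \<Longrightarrow> xs \<noteq> [] \<Longrightarrow> hprod m e xs \<inter> I \<noteq> {} \<Longrightarrow> hprod m e xs \<subseteq> I"
  unfolding hyperideal_def by (elim conjE) simp

lemma hyperideal_mult_closed: "hyperideal m e I \<Longrightarrow> a \<in> I \<Longrightarrow> m r a \<subseteq> I"
  unfolding hyperideal_def by (elim conjE) simp

lemma hyperideal_hsetprod_closed: "hyperideal m e I \<Longrightarrow> A \<subseteq> I \<Longrightarrow> hsetprod m B A \<subseteq> I"
  unfolding hsetprod_def using hyperideal_mult_closed by blast

lemma subset_hradical: "I \<subseteq> hradical m e I"
  unfolding hradical_def hpow_def by (auto intro!: exI[of _ 1])

lemma hyperideal_eq_UNIV_if_unit: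
  assumes "mult_hyperring m e" "hyperideal m e J" "a \<in> J" "hunit m e a"
  shows "J = UNIV"
proof -
  obtain b where "e \<in> m a b" using assms(4) unfolding hunit_def by blast
  then have "e \<in> J"
    using hyperideal_mult_closed[OF assms(2,3)] mult_hyperring_commute[OF assms(1)] by blast
  then show ?thesis
    using hyperideal_mult_closed[OF assms(2)] mult_hyperring_one[OF assms(1)] by blast
qed

lemma mem_hyperideal_if_unit_mult_subset:
  assumes "mult_hyperring m e" "hyperideal m e I" "hunit m e u" "m u y \<subseteq> I"
  shows "y \<in> I"
proof -
  obtain v where "e \<in> m u v" using assms(3) unfolding hunit_def by blast
  then have "y \<in> hsetprod m {y} (m u v)"
    using mult_hyperring_one[OF assms(1)] unfolding hsetprod_def by blast
  also have "\<dots> = hsetprod m (m u y) {v}"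
    using mult_hyperring_assoc[OF assms(1)] mult_hyperring_commute[OF assms(1)] by metis
  also have "\<dots> = hsetprod m {v} (m u y)"
    using hsetprod_commute[OF assms(1)] .
  also have "\<dots> \<subseteq> I" using hyperideal_hsetprod_closed[OF assms(2,4)] .
  finally show ?thesis .
qed

definition hcolon :: "('a \<Rightarrow> 'a \<Rightarrow> 'a set) \<Rightarrow> 'a set \<Rightarrow> 'a \<Rightarrow> 'a set" where
  "hcolon m I x = {r. m r x \<subseteq> I}"

lemma mem_hcolon_iff: "mult_hyperring m e \<Longrightarrow> r \<in> hcolon m I x \<longleftrightarrow> m x r \<subseteq> I"
  unfolding hcolon_def using mult_hyperring_commute[of m e r x] by simp

lemma hyperideal_hcolon:
  assumes mh: "mult_hyperring m e" and hI: "hyperideal m e I"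
  shows "hyperideal m e (hcolon m I x)"
  unfolding hyperideal_def
proof (intro conjI allI impI ballI)
  have "I \<subseteq> hcolon m I x"
    using hyperideal_mult_closed[OF hI] mem_hcolon_iff[OF mh] by blast
  then show "hcolon m I x \<noteq> {}" using hyperideal_nonempty[OF hI] by blast
next
  fix a b assume "a \<in> hcolon m I x" "b \<in> hcolon m I x"
  then have ax: "m x a \<subseteq> I" and bx: "m x b \<subseteq> I"
    using mem_hcolon_iff[OF mh] by blast+
  have "m x (a + - b) \<subseteq> {u + v | u v. u \<in> m x a \<and> v \<in> m x (- b)}"
    using mult_hyperring_distrib[OF mh] .
  also have "\<dots> \<subseteq> I"
  proof
    fix w assume "w \<in> {u + v | u v. u \<in> m x a \<and> v \<in> m x (- b)}"
    then obtain u t where "u \<in> m x a" "t \<in> m x b" "w = u - t"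
      using mult_hyperring_minus[OF mh] by fastforce
    then show "w \<in> I" using ax bx hyperideal_diff_closed[OF hI] by blast
  qed
  finally show "a - b \<in> hcolon m I x"
    using mem_hcolon_iff[OF mh] by simp
next
  fix r a assume "a \<in> hcolon m I x"
  show "m r a \<subseteq> hcolon m I x"
  proof
    fix c assume "c \<in> m r a"
    then have "m c x \<subseteq> hsetprod m (m r a) {x}" unfolding hsetprod_def by blast
    also have "\<dots> = hsetprod m {r} (m a x)" using mult_hyperring_assoc[OF mh] .
    also have "\<dots> \<subseteq> I"
      using hyperideal_hsetprod_closed[OF hI] \<open>a \<in> hcolon m I x\<close> unfolding hcolon_def by blast
    finally show "c \<in> hcolon m I x" unfolding hcolon_def by simp
  qed
next
  fix xs assume xs: "xs \<noteq> []" "hprod m e xs \<inter> hcolon m I x \<noteq> {}"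
  then obtain c where c: "c \<in> hprod m e xs" "m c x \<subseteq> I" unfolding hcolon_def by blast
  have snoc: "hprod m e (xs @ [x]) = hsetprod m (hprod m e xs) {x}"
    using hprod_snoc[OF mh xs(1)] .
  then have "m c x \<subseteq> hprod m e (xs @ [x])" using c(1) unfolding hsetprod_def by blast
  then have "hprod m e (xs @ [x]) \<inter> I \<noteq> {}" using c(2) mult_hyperring_nonempty[OF mh] by blast
  then have "hprod m e (xs @ [x]) \<subseteq> I" using hyperideal_hprod_closed[OF hI] by simp
  then show "hprod m e xs \<subseteq> hcolon m I x" using snoc unfolding hcolon_def hsetprod_def by blast
qed

lemma local_hyperringI:
  assumes mh: "mult_hyperring m e" and hL: "hyperideal m e L" and "L \<noteq> UNIV"
    and nonunits: "\<And>a. \<not> hunit m e a \<Longrightarrow> a \<in> L"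
  shows "local_hyperring m e"
proof -
  have proper_subset: "J \<subseteq> L" if "hyperideal m e J" "J \<noteq> UNIV" for J
    using hyperideal_eq_UNIV_if_unit[OF mh that(1)] that(2) nonunits by blast
  have "maximal_hyperideal m e L"
    unfolding maximal_hyperideal_def
  proof (intro conjI allI impI)
    fix J assume "hyperideal m e J" "L \<subseteq> J"
    then show "J = L \<or> J = UNIV" using proper_subset by blast
  qed (use hL \<open>L \<noteq> UNIV\<close> in simp_all)
  moreover have "M = L" if max: "maximal_hyperideal m e M" for M
  proof -
    have "hyperideal m e M" "M \<noteq> UNIV" using max unfolding maximal_hyperideal_def by simp_all
    then have "M \<subseteq> L" by (rule proper_subset)
    then have "L = M \<or> L = UNIV" using max hL unfolding maximal_hyperideal_def by simp
    with \<open>L \<noteq> UNIV\<close> show "M = L" by simp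
  qed
  ultimately show ?thesis unfolding local_hyperring_def by (rule ex1I)
qed

lemma one_absorbing_primaryD:
  assumes "one_absorbing_primary m e I"
  shows "hyperideal m e I" and "I \<noteq> UNIV"
    and "\<lbrakk>\<not> hunit m e x; \<not> hunit m e y; \<not> hunit m e z; hsetprod m (m x y) {z} \<subseteq> I\<rbrakk>
         \<Longrightarrow> m x y \<subseteq> I \<or> z \<in> hradical m e I"
  using assms unfolding one_absorbing_primary_def by simp_all

lemma one_absorbing_primary_mult_subset:
  assumes mh: "mult_hyperring m e" and nonlocal: "\<not> local_hyperring m e"
    and I: "one_absorbing_primary m e I" and xy: "m x y \<subseteq> I"
  shows "x \<in> I \<or> y \<in> hradical m e I"
proof (rule ccontr)
  assume contra: "\<not> (x \<in> I \<or> y \<in> hradical m e I)"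
  note hI = one_absorbing_primaryD(1)[OF I]
  have nx: "\<not> hunit m e x"
  proof
    assume "hunit m e x"
    then have "y \<in> I" using mem_hyperideal_if_unit_mult_subset[OF mh hI _ xy] by blast
    then have "y \<in> hradical m e I" using subset_hradical[of I m e] by blast
    with contra show False by blast
  qed
  have ny: "\<not> hunit m e y"
  proof
    assume "hunit m e y"
    moreover have "m y x \<subseteq> I" using xy mult_hyperring_commute[OF mh, of y x] by simp
    ultimately have "x \<in> I" using mem_hyperideal_if_unit_mult_subset[OF mh hI] by blast
    with contra show False by blast
  qed
  have "r \<in> hcolon m I x" if "\<not> hunit m e r" for r
  proof -
    have "hsetprod m (m r x) {y} \<subseteq> I"
      using mult_hyperring_assoc[OF mh] hyperideal_hsetprod_closed[OF hI xy] by simp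
    then have "m r x \<subseteq> I" using one_absorbing_primaryD(3)[OF I that nx ny] contra by blast
    then show ?thesis unfolding hcolon_def by simp
  qed
  moreover have "e \<notin> hcolon m I x"
    using contra mult_hyperring_one[OF mh, of x] unfolding mem_hcolon_iff[OF mh] by blast
  ultimately have "local_hyperring m e"
    using local_hyperringI[OF mh hyperideal_hcolon[OF mh hI]] by blast
  with nonlocal show False ..
qed

lemma one_absorbing_primary_if_primary:
  assumes "primary_hyperideal m e I"
  shows "one_absorbing_primary m e I"
proof -
  have prime: "a \<in> I \<or> b \<in> hradical m e I" if "m a b \<subseteq> I" for a b
    using assms that unfolding primary_hyperideal_def by blast
  have "m x y \<subseteq> I" if "hsetprod m (m x y) {z} \<subseteq> I" "z \<notin> hradical m e I" for x y z
  proof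
    fix a assume "a \<in> m x y"
    then have "m a z \<subseteq> I" using that(1) unfolding hsetprod_def by blast
    then show "a \<in> I" using prime that(2) by blast
  qed
  moreover have "hyperideal m e I" "I \<noteq> UNIV"
    using assms unfolding primary_hyperideal_def by blast+
  ultimately show ?thesis unfolding one_absorbing_primary_def by blast
qed

theorem mainTheorem7:
  fixes m :: "'a::ab_group_add \<Rightarrow> 'a \<Rightarrow> 'a set" and e :: 'a and I :: "'a set"
  assumes "mult_hyperring m e"
    and "\<not> local_hyperring m e"
    and "hyperideal m e I"
    and "I \<noteq> {0}"
  shows "one_absorbing_primary m e I \<longleftrightarrow> primary_hyperideal m e I"
proof
  assume I: "one_absorbing_primary m e I"
  then show "primary_hyperideal m e I"
    unfolding primary_hyperideal_def
    using one_absorbing_primary_mult_subset[OF assms(1,2) I] one_absorbing_primaryD(2)[OF I]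
      assms(3,4) by blast
next
  assume "primary_hyperideal m e I"
  then show "one_absorbing_primary m e I" by (rule one_absorbing_primary_if_primary)
qed

end
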